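(* Let $n\in\mathbb{N}_+$ and suppose $X\sim\mathsf{Poi}(\lambda_1)$ or $X\sim\mathsf{B}(n,\frac{\lambda_1}{n})$, where $0\le\lambda_1\le n$. There exist universal constants $M_1>0$, $M_2>0$ (not depending on $\lambda_1,\lambda_2,n$) such that: (1) if $0\le\lambda_2\le n$ and $\lambda_2\ge\lambda_1$, then $(\lambda_2-\lambda_1)P(X\ge\lambda_2)\le M_1\,(\lambda_2\wedge\sqrt{\lambda_2})$; (2) if $\lambda_1\ge\lambda_2\ge1$, then $(\lambda_1-\lambda_2)P(X\le\lambda_2)\le M_2\sqrt{\lambda_2}$.
   Context: $\mathsf{Poi}(\lambda)$ is the Poisson distribution with mean $\lambda$, $\mathsf{B}(n,p)$ the binomial distribution; $a\wedge b=\min\{a,b\}$. *)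

theory Defs
  imports "HOL-Probability.Probability"
begin

text \<open>Poisson distribution Poi(lambda) for lambda >= 0. The library's poisson_pmf
  is only meaningful for rate > 0; Poi(0) is the point mass at 0.\<close>
definition poi_pmf :: "real \<Rightarrow> nat pmf" where
  "poi_pmf l = (if l = 0 then return_pmf 0 else poisson_pmf l)"

end

theory Submission
  imports Defs
begin

text \<open>Both distributions satisfy \<open>E(X - \<lambda>\<^sub>1)\<^sup>2 \<le> \<lambda>\<^sub>1\<close> (the binomial one has variance
  \<open>\<lambda>\<^sub>1(1 - \<lambda>\<^sub>1/n)\<close>), so Chebyshev's inequality
  gives \<open>d\<^sup>2 P(|X - \<lambda>\<^sub>1| \<ge> d) \<le> \<lambda>\<^sub>1\<close> for every deviation \<open>d \<ge> 0\<close>. Combined with the trivial bound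
  \<open>P \<le> 1\<close>, an inequality \<open>d\<^sup>2 P \<le> a + b d\<close> yields \<open>d P \<le> \<surd>a + b\<close>: in (1) take \<open>d = \<lambda>\<^sub>2 - \<lambda>\<^sub>1\<close>,
  \<open>a = \<lambda>\<^sub>1\<close>, \<open>b = 0\<close> (and also \<open>d P \<le> d \<le> \<lambda>\<^sub>2\<close>), and in (2) take \<open>d = \<lambda>\<^sub>1 - \<lambda>\<^sub>2\<close>, \<open>a = \<lambda>\<^sub>2\<close>, \<open>b = 1\<close>, using \<open>\<lambda>\<^sub>1 = \<lambda>\<^sub>2 + d\<close>.
  Hence \<open>M\<^sub>1 = 1\<close> and \<open>M\<^sub>2 = 2\<close> work.\<close>

lemma nn_integral_binomial_pmf_sq_dev:
  assumes "0 \<le> p" "p \<le> 1"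
  shows "(\<integral>\<^sup>+k. ennreal ((real k - c)\<^sup>2) \<partial>binomial_pmf n p)
           = ennreal (real n * p * (1 - p) + (real n * p - c)\<^sup>2)"
proof (induction n arbitrary: c)
  case 0
  then show ?case using assms by (simp add: binomial_pmf_0)
next
  case (Suc n)
  define m where "m = (\<lambda>c. real n * p * (1 - p) + (real n * p - c)\<^sup>2)"
  have m_nonneg: "0 \<le> m c" for c
    using assms unfolding m_def by simp
  have shifted: "(\<integral>\<^sup>+k. ennreal ((real ((if b then 1 else 0) + k) - c)\<^sup>2) \<partial>binomial_pmf n p)
                   = ennreal (m (c - (if b then 1 else 0)))" for b
    using Suc.IH[of "c - (if b then 1 else 0)"] unfolding m_def
    by (cases b) (simp_all add: algebra_simps)
  have "(\<integral>\<^sup>+k. ennreal ((real k - c)\<^sup>2) \<partial>binomial_pmf (Suc n) p)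
          = (\<integral>\<^sup>+b. ennreal (m (c - (if b then 1 else 0))) \<partial>bernoulli_pmf p)"
    using assms by (simp add: binomial_pmf_Suc shifted del: of_nat_add)
  also have "\<dots> = ennreal (m (c - 1)) * ennreal p + ennreal (m c) * ennreal (1 - p)"
    using assms by (subst nn_integral_bernoulli_pmf) auto
  also have "\<dots> = ennreal (m (c - 1) * p + m c * (1 - p))"
    using assms m_nonneg by (simp add: ennreal_mult'' ennreal_plus)
  also have "m (c - 1) * p + m c * (1 - p) = real (Suc n) * p * (1 - p) + (real (Suc n) * p - c)\<^sup>2"
    unfolding m_def by (simp add: algebra_simps power2_eq_square)
  finally show ?case .
qed

lemma poisson_sq_dev_sums: "(\<lambda>k. l ^ k / fact k * exp (-l) * (real k - l)\<^sup>2) sums (l::real)"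
proof -
  define a where "a = (\<lambda>k::nat. l ^ k / fact k)"
  have a_Suc: "real (Suc k) * a (Suc k) = l * a k" for k
  proof -
    have "(fact (Suc k) :: real) = real (Suc k) * fact k" by simp
    then show ?thesis unfolding a_def by (simp del: of_nat_Suc fact_Suc)
  qed
  have s0: "a sums exp l"
    unfolding a_def using exp_converges[of l] by (simp add: divide_inverse mult.commute)
  have s1: "(\<lambda>k. real k * a k) sums (l * exp l)"
  proof -
    have "(\<lambda>k. real (Suc k) * a (Suc k)) sums (l * exp l)"
      unfolding a_Suc using sums_mult[OF s0, of l] by simp
    then show ?thesis by (subst (asm) sums_Suc_iff) simp
  qed
  have s2: "(\<lambda>k. real k * (real k - 1) * a k) sums (l * (l * exp l))"
  proof -
    have "(\<lambda>k. real (Suc k) * (real (Suc k) - 1) * a (Suc k)) = (\<lambda>k. l * (real k * a k))"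
    proof
      fix k
      have "real (Suc k) * (real (Suc k) - 1) * a (Suc k) = real k * (real (Suc k) * a (Suc k))"
        by (simp add: algebra_simps)
      also have "\<dots> = l * (real k * a k)"
        unfolding a_Suc by simp
      finally show "real (Suc k) * (real (Suc k) - 1) * a (Suc k) = l * (real k * a k)" .
    qed
    then have "(\<lambda>k. real (Suc k) * (real (Suc k) - 1) * a (Suc k)) sums (l * (l * exp l))"
      using sums_mult[OF s1, of l] by simp
    then show ?thesis by (subst (asm) sums_Suc_iff) simp
  qed
  \<comment> \<open>\<open>(k - l)\<^sup>2 = k(k-1) + (1 - 2l)k + l\<^sup>2\<close>: the factorial moments of order 2, 1, 0 are \<open>l\<^sup>2, l, 1\<close>.\<close>
  have "(\<lambda>k. (real k * (real k - 1) * a k + (1 - 2*l) * (real k * a k) + l\<^sup>2 * a k) * exp (-l))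
          sums ((l * (l * exp l) + (1 - 2*l) * (l * exp l) + l\<^sup>2 * exp l) * exp (-l))"
    by (intro sums_mult2 sums_add sums_mult s0 s1 s2)
  moreover have "(l * (l * exp l) + (1 - 2*l) * (l * exp l) + l\<^sup>2 * exp l) * exp (-l) = l"
    by (simp add: algebra_simps power2_eq_square exp_minus)
  moreover have "(\<lambda>k. (real k * (real k - 1) * a k + (1 - 2*l) * (real k * a k) + l\<^sup>2 * a k) * exp (-l))
                   = (\<lambda>k. l ^ k / fact k * exp (-l) * (real k - l)\<^sup>2)"
    by (rule ext) (simp add: a_def field_simps power2_eq_square)
  ultimately show ?thesis by simp
qed

lemma nn_integral_poisson_pmf_sq_dev:
  assumes "0 < l"
  shows "(\<integral>\<^sup>+k. ennreal ((real k - l)\<^sup>2) \<partial>poisson_pmf l) = ennreal l"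
proof -
  have "(\<integral>\<^sup>+k. ennreal ((real k - l)\<^sup>2) \<partial>poisson_pmf l)
          = (\<Sum>k. ennreal (l ^ k / fact k * exp (-l) * (real k - l)\<^sup>2))"
    using assms by (simp add: nn_integral_measure_pmf nn_integral_count_space_nat
                              ennreal_mult'' [symmetric])
  also have "\<dots> = ennreal l"
    using poisson_sq_dev_sums[of l] assms by (subst suminf_ennreal2) (auto simp: sums_iff)
  finally show ?thesis .
qed

lemma nn_integral_sq_dev_le_mean:
  assumes "0 \<le> l" "l \<le> real n"
    and "D = poi_pmf l \<or> D = binomial_pmf n (l / real n)"
  shows "(\<integral>\<^sup>+k. ennreal ((real k - l)\<^sup>2) \<partial>D) \<le> ennreal l"
  using assms(3)
proof
  assume "D = poi_pmf l"
  then show ?thesis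
    using assms(1) by (cases "l = 0") (simp_all add: poi_pmf_def nn_integral_poisson_pmf_sq_dev)
next
  assume D: "D = binomial_pmf n (l / real n)"
  have p: "0 \<le> l / real n" "l / real n \<le> 1" and mean: "real n * (l / real n) = l"
    using assms by (auto simp: divide_le_eq_1)
  have "(\<integral>\<^sup>+k. ennreal ((real k - l)\<^sup>2) \<partial>D) = ennreal (l * (1 - l / real n))"
    using nn_integral_binomial_pmf_sq_dev[OF p, where c = l and n = n] D mean by simp
  also have "\<dots> \<le> ennreal l"
    using p assms(1) by (intro ennreal_leI) (simp add: mult_left_le)
  finally show ?thesis .
qed

lemma Chebyshev_inequality_pmf:
  fixes D :: "'a pmf" and f :: "'a \<Rightarrow> real"
  assumes "(\<integral>\<^sup>+x. ennreal ((f x - c)\<^sup>2) \<partial>D) \<le> ennreal v" "0 \<le> d" "0 \<le> v"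
  shows "d\<^sup>2 * measure_pmf.prob D {x. d \<le> \<bar>f x - c\<bar>} \<le> v"
proof -
  let ?S = "{x. d \<le> \<bar>f x - c\<bar>}"
  have "ennreal (d\<^sup>2 * measure_pmf.prob D ?S) = (\<integral>\<^sup>+x. ennreal (d\<^sup>2) * indicator ?S x \<partial>D)"
    by (simp add: measure_pmf.emeasure_eq_measure ennreal_mult'' nn_integral_cmult_indicator)
  also have "\<dots> \<le> (\<integral>\<^sup>+x. ennreal ((f x - c)\<^sup>2) \<partial>D)"
  proof (intro nn_integral_mono)
    fix x
    have "x \<in> ?S \<Longrightarrow> d\<^sup>2 \<le> (f x - c)\<^sup>2"
      using \<open>0 \<le> d\<close> abs_le_square_iff[of d "f x - c"] by simp
    then show "ennreal (d\<^sup>2) * indicator ?S x \<le> ennreal ((f x - c)\<^sup>2)"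
      by (cases "x \<in> ?S") simp_all
  qed
  also have "\<dots> \<le> ennreal v" by fact
  finally show ?thesis using \<open>0 \<le> v\<close> by (simp add: ennreal_le_iff)
qed

lemma mult_le_sqrt_add_if_sq_mult_le:
  fixes a b d P :: real
  assumes "0 \<le> a" "0 \<le> b" "0 \<le> d" "0 \<le> P" "P \<le> 1" "d\<^sup>2 * P \<le> a + b * d"
  shows "d * P \<le> sqrt a + b"
proof (cases "d \<le> sqrt a")
  case True
  have "d * P \<le> d" using assms by (simp add: mult_left_le)
  with True \<open>0 \<le> b\<close> show ?thesis by linarith
next
  case False
  then have "0 < d" using \<open>0 \<le> a\<close> by (meson less_le_trans not_le real_sqrt_ge_zero)
  have "d * (d * P) \<le> a + b * d"
    using assms(6) by (simp add: power2_eq_square mult.assoc)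
  also have "a = sqrt a * sqrt a" using \<open>0 \<le> a\<close> by simp
  also have "sqrt a * sqrt a \<le> d * sqrt a"
    using False \<open>0 \<le> a\<close> by (intro mult_right_mono) auto
  finally have "d * (d * P) \<le> d * (sqrt a + b)" by (simp add: algebra_simps)
  with \<open>0 < d\<close> show ?thesis by simp
qed

context
  fixes n :: nat and l1 :: real and D :: "nat pmf"
  assumes l1: "0 \<le> l1" "l1 \<le> real n"
    and D: "D = poi_pmf l1 \<or> D = binomial_pmf n (l1 / real n)"
begin

lemma sq_dev_mult_prob_le_mean:
  assumes "0 \<le> d" "A \<subseteq> {k. d \<le> \<bar>real k - l1\<bar>}"
  shows "d\<^sup>2 * measure_pmf.prob D A \<le> l1"
proof -
  have "measure_pmf.prob D A \<le> measure_pmf.prob D {k. d \<le> \<bar>real k - l1\<bar>}"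
    using assms(2) by (rule measure_pmf.finite_measure_mono) simp
  then have "d\<^sup>2 * measure_pmf.prob D A \<le> d\<^sup>2 * measure_pmf.prob D {k. d \<le> \<bar>real k - l1\<bar>}"
    by (rule mult_left_mono) simp
  also have "\<dots> \<le> l1"
    using l1 D assms(1) by (intro Chebyshev_inequality_pmf nn_integral_sq_dev_le_mean) auto
  finally show ?thesis .
qed

lemma upper_deviation_mult_prob_le:
  assumes "l1 \<le> l2"
  shows "(l2 - l1) * measure_pmf.prob D {k. real k \<ge> l2} \<le> min l2 (sqrt l2)"
proof -
  let ?d = "l2 - l1" and ?P = "measure_pmf.prob D {k. real k \<ge> l2}"
  have "?d\<^sup>2 * ?P \<le> l1"
    using assms by (intro sq_dev_mult_prob_le_mean) auto
  then have "?d * ?P \<le> sqrt l1 + 0"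
    using assms l1 by (intro mult_le_sqrt_add_if_sq_mult_le) auto
  moreover have "?d * ?P \<le> ?d"
    using assms by (simp add: mult_left_le)
  moreover have "sqrt l1 \<le> sqrt l2"
    using assms by simp
  ultimately have "?d * ?P \<le> sqrt l2" "?d * ?P \<le> l2"
    using l1 by linarith+
  then show ?thesis by simp
qed

lemma lower_deviation_mult_prob_le:
  assumes "l2 \<le> l1" "1 \<le> l2"
  shows "(l1 - l2) * measure_pmf.prob D {k. real k \<le> l2} \<le> 2 * sqrt l2"
proof -
  let ?d = "l1 - l2" and ?P = "measure_pmf.prob D {k. real k \<le> l2}"
  have "?d\<^sup>2 * ?P \<le> l2 + 1 * ?d"
    using assms by (simp, intro sq_dev_mult_prob_le_mean) auto
  then have "?d * ?P \<le> sqrt l2 + 1"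
    using assms by (intro mult_le_sqrt_add_if_sq_mult_le) auto
  moreover have "1 \<le> sqrt l2"
    using assms by simp
  ultimately show ?thesis by linarith
qed

end

theorem lemma7:
  "\<exists>M1>0. \<exists>M2>0. \<forall>(n::nat) (l1::real) (l2::real) (D::nat pmf).
     n \<ge> 1 \<and> 0 \<le> l1 \<and> l1 \<le> real n \<and>
     (D = poi_pmf l1 \<or> D = binomial_pmf n (l1 / real n)) \<longrightarrow>
       ((0 \<le> l2 \<and> l2 \<le> real n \<and> l1 \<le> l2 \<longrightarrow>
          (l2 - l1) * measure_pmf.prob D {k. real k \<ge> l2} \<le> M1 * min l2 (sqrt l2)) \<and>
        (l1 \<ge> l2 \<and> l2 \<ge> 1 \<longrightarrow>
          (l1 - l2) * measure_pmf.prob D {k. real k \<le> l2} \<le> M2 * sqrt l2))"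
proof (rule exI[of _ 1], intro conjI exI[of _ 2] allI impI)
  fix n :: nat and l1 l2 :: real and D :: "nat pmf"
  assume "1 \<le> n \<and> 0 \<le> l1 \<and> l1 \<le> real n \<and> (D = poi_pmf l1 \<or> D = binomial_pmf n (l1 / real n))"
  then have "0 \<le> l1" "l1 \<le> real n" "D = poi_pmf l1 \<or> D = binomial_pmf n (l1 / real n)"
    by auto
  note bounds = upper_deviation_mult_prob_le[OF this] lower_deviation_mult_prob_le[OF this]
  show "(l2 - l1) * measure_pmf.prob D {k. real k \<ge> l2} \<le> 1 * min l2 (sqrt l2)"
    if "0 \<le> l2 \<and> l2 \<le> real n \<and> l1 \<le> l2"
    using that bounds(1) by simp
  show "(l1 - l2) * measure_pmf.prob D {k. real k \<le> l2} \<le> 2 * sqrt l2"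
    if "l2 \<le> l1 \<and> 1 \<le> l2"
    using that bounds(2) by simp
qed simp_all

end
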